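(* Let $G$ be a graph of order $n \ge 3$. Suppose that for every vertex $v \in V(G)$ and for all $u,w \in N(v)$ we have $\deg_{\langle N(v)\rangle}(u) + \deg_{\langle N(v)\rangle}(w) \ge \deg_G(v)$. Then $G$ is hamiltonian and $\{1,2\}$-extendable.
   Context: $N(v)$ denotes the open neighbourhood of $v$ and $\langle X\rangle$ the subgraph of $G$ induced by $X \subseteq V(G)$. A graph $G$ is $\{1,2\}$-extendable if for every non-hamiltonian cycle $C$ of $G$ there exists a cycle $C'$ of length $|C|+1$ or $|C|+2$ whose vertex set contains all vertices of $C$. *)

theory Defs
  imports Main
begin

definition simple_graph :: "'a set \<Rightarrow> ('a \<Rightarrow> 'a \<Rightarrow> bool) \<Rightarrow> bool" where
  "simple_graph V E \<longleftrightarrow> finite V \<and> (\<forall>x y. E x y \<longrightarrow> x \<in> V \<and> y \<in> V)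
     \<and> (\<forall>x y. E x y \<longrightarrow> E y x) \<and> (\<forall>x. \<not> E x x)"

definition nbhd :: "'a set \<Rightarrow> ('a \<Rightarrow> 'a \<Rightarrow> bool) \<Rightarrow> 'a \<Rightarrow> 'a set" where
  "nbhd V E v = {u \<in> V. E v u}"

definition degree :: "'a set \<Rightarrow> ('a \<Rightarrow> 'a \<Rightarrow> bool) \<Rightarrow> 'a \<Rightarrow> nat" where
  "degree V E v = card (nbhd V E v)"

definition induced_degree :: "'a set \<Rightarrow> ('a \<Rightarrow> 'a \<Rightarrow> bool) \<Rightarrow> 'a \<Rightarrow> nat" where
  "induced_degree X E u = card {w \<in> X. E u w}"

definition is_path :: "'a set \<Rightarrow> ('a \<Rightarrow> 'a \<Rightarrow> bool) \<Rightarrow> 'a list \<Rightarrow> bool" where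
  "is_path V E p \<longleftrightarrow> p \<noteq> [] \<and> set p \<subseteq> V \<and> (\<forall>i. Suc i < length p \<longrightarrow> E (p ! i) (p ! Suc i))"

definition connected_graph :: "'a set \<Rightarrow> ('a \<Rightarrow> 'a \<Rightarrow> bool) \<Rightarrow> bool" where
  "connected_graph V E \<longleftrightarrow> V \<noteq> {} \<and>
     (\<forall>x\<in>V. \<forall>y\<in>V. \<exists>p. is_path V E p \<and> hd p = x \<and> last p = y)"

definition is_cycle :: "'a set \<Rightarrow> ('a \<Rightarrow> 'a \<Rightarrow> bool) \<Rightarrow> 'a list \<Rightarrow> bool" where
  "is_cycle V E c \<longleftrightarrow> length c \<ge> 3 \<and> distinct c \<and> set c \<subseteq> V
     \<and> (\<forall>i. Suc i < length c \<longrightarrow> E (c ! i) (c ! Suc i)) \<and> E (last c) (hd c)"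

definition hamiltonian :: "'a set \<Rightarrow> ('a \<Rightarrow> 'a \<Rightarrow> bool) \<Rightarrow> bool" where
  "hamiltonian V E \<longleftrightarrow> (\<exists>c. is_cycle V E c \<and> set c = V)"

definition extendable_12 :: "'a set \<Rightarrow> ('a \<Rightarrow> 'a \<Rightarrow> bool) \<Rightarrow> bool" where
  "extendable_12 V E \<longleftrightarrow> (\<forall>c. is_cycle V E c \<and> set c \<noteq> V \<longrightarrow>
     (\<exists>c'. is_cycle V E c' \<and> set c \<subseteq> set c' \<and>
           (length c' = length c + 1 \<or> length c' = length c + 2)))"

end

theory Submission imports Defs begin

text \<open>The degree condition makes every non-hamiltonian cycle C extendable, i.e. there is a
  cycle on V(C) plus one vertex. Starting from a triangle (the condition at a vertex with two
  neighbours forces an edge inside its neighbourhood), repeated extension reaches a hamiltonian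
  cycle. Suppose C is not extendable, pick x off C adjacent to C, let X = N(x) \<inter> C and write v+ for
  the successor of v on C. For w \<in> X the condition at w, applied to x and w+, yields
  g(w) \<ge> h(w) + 2, where g(w) counts the u \<in> X adjacent to w and w+ and h(w) the v \<in> X with
  w adjacent to v and v+. But g and h count a relation and its converse, so summing over X
  gives 2|X| \<le> 0.\<close>

lemma is_cycle_iff_successively:
  "is_cycle V E c \<longleftrightarrow>
     length c \<ge> 3 \<and> distinct c \<and> set c \<subseteq> V \<and> successively E c \<and> E (last c) (hd c)"
  unfolding is_cycle_def successively_conv_nth by blast

lemma is_cycle_rotate1:
  assumes c: "is_cycle V E c"
  shows "is_cycle V E (rotate1 c)"
proof (cases c)
  case Nil
  then show ?thesis using c by (simp add: is_cycle_def)
next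
  case (Cons a xs)
  with c have "xs \<noteq> []" "successively E (a # xs)" "E (last (a # xs)) a"
    by (auto simp: is_cycle_iff_successively)
  then have "successively E xs" "E a (hd xs)" "E (last xs) a"
    by (cases xs; auto)+
  then show ?thesis using c Cons \<open>xs \<noteq> []\<close>
    by (auto simp: is_cycle_iff_successively successively_append_iff)
qed

lemma is_cycle_rotate: "is_cycle V E c \<Longrightarrow> is_cycle V E (rotate n c)"
  by (induction n) (auto simp: is_cycle_rotate1)

lemma is_cycle_snoc:
  assumes "is_cycle V E c" "y \<notin> set c" "y \<in> V" "E (last c) y" "E y (hd c)"
  shows "is_cycle V E (c @ [y])"
proof -
  have "c \<noteq> []" using assms(1) by (auto simp: is_cycle_def)
  then show ?thesis using assms by (auto simp: is_cycle_iff_successively successively_append_iff)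
qed

lemma rotate_last_eq:
  assumes "v \<in> set c"
  obtains m where "last (rotate m c) = v"
proof -
  obtain P Q where "c = (P @ [v]) @ Q" using split_list[OF assms] by auto
  then have "rotate (length (P @ [v])) c = Q @ P @ [v]" by (simp only: rotate_append)
  then show ?thesis using that by (metis last_appendR last_snoc snoc_eq_iff_butlast)
qed

definition cycle_succ :: "'a list \<Rightarrow> 'a \<Rightarrow> 'a" where
  "cycle_succ c v = c ! (Suc (inv_into {..<length c} ((!) c) v) mod length c)"

lemma cycle_succ_nth:
  assumes "distinct c" "i < length c"
  shows "cycle_succ c (c ! i) = c ! (Suc i mod length c)"
proof -
  have "inj_on ((!) c) {..<length c}" using assms(1) by (simp add: inj_on_nth)
  then show ?thesis using assms(2) by (simp add: cycle_succ_def inv_into_f_f)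
qed

lemma cycle_succ_in_set:
  assumes "distinct c" "v \<in> set c"
  shows "cycle_succ c v \<in> set c"
proof -
  obtain i where i: "i < length c" "v = c ! i" using assms(2) by (auto simp: in_set_conv_nth)
  then have "Suc i mod length c < length c" by (intro mod_less_divisor) auto
  then show ?thesis using i assms(1) by (simp add: cycle_succ_nth)
qed

lemma inj_on_cycle_succ:
  assumes d: "distinct c"
  shows "inj_on (cycle_succ c) (set c)"
proof
  fix v w assume "v \<in> set c" "w \<in> set c" and eq: "cycle_succ c v = cycle_succ c w"
  then obtain i j where ij: "i < length c" "j < length c" "v = c ! i" "w = c ! j"
    by (auto simp: in_set_conv_nth)
  moreover have "Suc i mod length c < length c" "Suc j mod length c < length c"
    using ij by (intro mod_less_divisor; auto)+
  ultimately have "Suc i mod length c = Suc j mod length c"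
    using eq d by (simp add: cycle_succ_nth nth_eq_iff_index_eq)
  then have "i = j" using ij by (auto simp: mod_Suc split: if_splits)
  then show "v = w" using ij by simp
qed

lemma cycle_succ_rotate:
  assumes d: "distinct c" and v: "v \<in> set c"
  shows "cycle_succ (rotate m c) v = cycle_succ c v"
proof -
  define n where "n = length c"
  obtain k where k: "k < n" "v = rotate m c ! k"
    using v by (metis in_set_conv_nth length_rotate set_rotate n_def)
  have n: "0 < length c" using v by (rule length_pos_if_in_set)
  have "cycle_succ (rotate m c) v = rotate m c ! (Suc k mod n)"
    using k d by (simp add: n_def cycle_succ_nth)
  also have "\<dots> = c ! ((m + Suc k mod n) mod n)"
    using n by (simp add: n_def nth_rotate)
  also have "\<dots> = c ! (Suc ((m + k) mod n) mod n)"
    by (simp add: mod_add_right_eq mod_Suc_eq)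
  also have "\<dots> = cycle_succ c (c ! ((m + k) mod n))"
    using n d by (simp add: n_def cycle_succ_nth)
  also have "\<dots> = cycle_succ c v"
    using k by (simp add: n_def nth_rotate)
  finally show ?thesis .
qed

lemma cycle_succ_append:
  assumes "distinct (P @ Q)" "P \<noteq> []" "Q \<noteq> []"
  shows "cycle_succ (P @ Q) (last P) = hd Q"
proof -
  have "length P - 1 < length (P @ Q)" using assms(2) by (cases P) auto
  from cycle_succ_nth[OF assms(1) this] show ?thesis
    using assms(2,3) by (simp add: last_conv_nth nth_append hd_conv_nth)
qed

lemma cycle_succ_last:
  assumes "distinct c" "c \<noteq> []"
  shows "cycle_succ c (last c) = hd c"
proof -
  have "length c - 1 < length c" using assms(2) by simp
  from cycle_succ_nth[OF assms(1) this] show ?thesis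
    using assms(2) by (simp add: last_conv_nth hd_conv_nth)
qed

definition extendable_cycle :: "'a set \<Rightarrow> ('a \<Rightarrow> 'a \<Rightarrow> bool) \<Rightarrow> 'a list \<Rightarrow> bool" where
  "extendable_cycle V E c \<longleftrightarrow>
     (\<exists>c'. is_cycle V E c' \<and> set c \<subseteq> set c' \<and> length c' = length c + 1)"

lemma extendable_cycle_rotate_iff:
  "extendable_cycle V E (rotate m c) \<longleftrightarrow> extendable_cycle V E c"
  by (simp add: extendable_cycle_def)

lemma extendable_cycle_snoc:
  assumes "is_cycle V E (c @ [y])"
  shows "extendable_cycle V E c"
  using assms unfolding extendable_cycle_def by (intro exI[of _ "c @ [y]"]) auto

lemma rotation_ending_at:
  assumes d: "distinct c" and v: "v \<in> set c"
  obtains m where "last (rotate m c) = v" "hd (rotate m c) = cycle_succ c v"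
proof -
  obtain m where last: "last (rotate m c) = v" using rotate_last_eq[OF v] .
  have "rotate m c \<noteq> []" using v by auto
  then have "hd (rotate m c) = cycle_succ (rotate m c) (last (rotate m c))"
    using d by (simp add: cycle_succ_last)
  then have "hd (rotate m c) = cycle_succ c v"
    unfolding last cycle_succ_rotate[OF d v] .
  with last that show ?thesis by blast
qed

lemma is_cycle_edge_succ:
  assumes c: "is_cycle V E c" and v: "v \<in> set c"
  shows "E v (cycle_succ c v)"
proof -
  have "distinct c" using c by (simp add: is_cycle_def)
  then obtain m where m: "last (rotate m c) = v" "hd (rotate m c) = cycle_succ c v"
    using rotation_ending_at[OF _ v] by blast
  have "E (last (rotate m c)) (hd (rotate m c))"
    using is_cycle_rotate[OF c, of m] unfolding is_cycle_def by blast
  then show ?thesis unfolding m .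
qed

lemma extendable_cycle_insert:
  assumes c: "is_cycle V E c" and v: "v \<in> set c" and y: "y \<notin> set c" "y \<in> V"
    and "E v y" "E y (cycle_succ c v)"
  shows "extendable_cycle V E c"
proof -
  have d: "distinct c" using c by (simp add: is_cycle_def)
  obtain m where m: "last (rotate m c) = v" "hd (rotate m c) = cycle_succ c v"
    using rotation_ending_at[OF d v] .
  have "is_cycle V E (rotate m c @ [y])"
    using is_cycle_rotate[OF c] m assms by (intro is_cycle_snoc) simp_all
  then have "extendable_cycle V E (rotate m c)" by (rule extendable_cycle_snoc)
  then show ?thesis unfolding extendable_cycle_rotate_iff .
qed

lemma hamiltonian_if_cycles_extendable:
  assumes fin: "finite V" and ext: "\<And>c. is_cycle V E c \<Longrightarrow> set c \<noteq> V \<Longrightarrow> extendable_cycle V E c"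
    and c: "is_cycle V E c"
  shows "hamiltonian V E"
  using c
proof (induction "card V - length c" arbitrary: c rule: less_induct)
  case less
  show ?case
  proof (cases "set c = V")
    case True
    then show ?thesis using less.prems unfolding hamiltonian_def by blast
  next
    case False
    then obtain c' where c': "is_cycle V E c'" "length c' = length c + 1"
      using ext[OF less.prems] unfolding extendable_cycle_def by blast
    have "length c' = card (set c')" using c'(1) by (simp add: is_cycle_def distinct_card)
    also have "\<dots> \<le> card V" using c'(1) fin by (intro card_mono) (auto simp: is_cycle_def)
    finally show ?thesis using less.hyps[OF _ c'(1)] c'(2) by simp
  qed
qed

lemma is_path_leaves_set:
  assumes p: "is_path V E p" and "hd p \<in> S" "last p \<notin> S"
  obtains i where "Suc i < length p" "p ! i \<in> S" "p ! Suc i \<notin> S" "E (p ! i) (p ! Suc i)"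
proof -
  have ne: "p \<noteq> []" using p by (simp add: is_path_def)
  have "\<exists>j. j < length p \<and> p ! j \<notin> S"
    using assms ne by (intro exI[of _ "length p - 1"]) (simp add: last_conv_nth)
  then obtain j where j: "j < length p" "p ! j \<notin> S" and least: "\<forall>k<j. p ! k \<in> S"
    by (auto simp: exists_least_iff[of "\<lambda>j. j < length p \<and> p ! j \<notin> S"])
  have "j \<noteq> 0" using j(2) assms(2) ne by (metis hd_conv_nth)
  then obtain i where ij: "j = Suc i" by (cases j) auto
  show ?thesis by (rule that[of i]) (use j least p in \<open>auto simp: ij is_path_def\<close>)
qed

lemma connected_graph_edge_leaving:
  assumes conn: "connected_graph V E" and a: "a \<in> S" "a \<in> V" and z: "z \<in> V" "z \<notin> S"
  obtains u x where "u \<in> S" "x \<in> V" "x \<notin> S" "E u x"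
proof -
  obtain p where p: "is_path V E p" "hd p = a" "last p = z"
    using conn a z unfolding connected_graph_def by blast
  then obtain i where i: "p ! i \<in> S" "p ! Suc i \<notin> S" "E (p ! i) (p ! Suc i)" "Suc i < length p"
    using is_path_leaves_set[of V E p S] a z by metis
  then have "p ! Suc i \<in> V" using p(1) nth_mem by (fastforce simp: is_path_def)
  with i that show ?thesis by blast
qed

lemma card_le_card_Int_if_outside_Un:
  assumes L: "finite L" and "A \<subseteq> L" "B \<subseteq> L" and D: "D \<subseteq> L - (A \<union> B)"
    and cover: "card L \<le> card A + card B"
  shows "card D \<le> card (A \<inter> B)"
proof -
  have fin: "finite A" "finite B" "finite D" using assms finite_subset by blast+
  have "card (A \<union> B) + card D = card (A \<union> B \<union> D)"
    using fin D by (subst card_Un_disjoint) auto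
  also have "\<dots> \<le> card L" using assms by (intro card_mono) auto
  finally show ?thesis using card_Un_Int[OF fin(1,2)] cover by linarith
qed

lemma sum_card_filter_swap:
  assumes "finite X"
  shows "(\<Sum>w\<in>X. card {u \<in> X. R u w}) = (\<Sum>w\<in>X. card {u \<in> X. R w u})"
proof -
  have card_filter: "card {u \<in> X. P u} = (\<Sum>u\<in>X. if P u then 1 else 0)" for P
    using assms by (simp add: sum.If_cases Int_def)
  show ?thesis unfolding card_filter by (rule sum.swap)
qed

locale sgraph =
  fixes V :: "'a set" and E :: "'a \<Rightarrow> 'a \<Rightarrow> bool"
  assumes simple: "simple_graph V E"
begin

lemma finite_vertices: "finite V"
  using simple by (simp add: simple_graph_def)

lemma edge_commute: "E x y \<longleftrightarrow> E y x"
  using simple unfolding simple_graph_def by blast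

lemma edge_irrefl: "\<not> E x x"
  using simple by (simp add: simple_graph_def)

lemma edge_vertices: "E x y \<Longrightarrow> x \<in> V \<and> y \<in> V"
  using simple by (simp add: simple_graph_def)

lemma is_cycle_reverse_prefix:
  assumes c: "is_cycle V E (P @ Q)" and ne: "P \<noteq> []" "Q \<noteq> []"
    and x: "x \<notin> set (P @ Q)" "x \<in> V"
    and "E (hd P) (hd Q)" "E (last Q) x" "E x (last P)"
  shows "is_cycle V E (rev P @ Q @ [x])"
proof -
  have "successively E P" using c by (auto simp: is_cycle_iff_successively successively_append_iff)
  then have "successively E (rev P)"
    unfolding successively_rev by (rule successively_mono) (simp add: edge_commute)
  then show ?thesis using assms
    by (auto simp: is_cycle_iff_successively successively_append_iff hd_rev last_rev)
qed

text \<open>Rotated to the form v+ \<dots> w w+ \<dots> v, the cycle is rerouted as w \<dots> v+ w+ \<dots> v x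
  through the chord v+ w+.\<close>
lemma extendable_cycle_crossing:
  assumes c: "is_cycle V E c" and v: "v \<in> set c" and w: "w \<in> set c" "w \<noteq> v"
    and x: "x \<notin> set c" "x \<in> V" "E x v" "E x w"
    and chord: "E (cycle_succ c v) (cycle_succ c w)"
  shows "extendable_cycle V E c"
proof -
  have d: "distinct c" using c by (simp add: is_cycle_def)
  obtain m where m: "last (rotate m c) = v" "hd (rotate m c) = cycle_succ c v"
    using rotation_ending_at[OF d v] .
  define c' where "c' = rotate m c"
  obtain P0 Q where split: "c' = P0 @ w # Q"
    using split_list[of w c'] w by (auto simp: c'_def)
  define P where "P = P0 @ [w]"
  have c'_PQ: "c' = P @ Q" by (simp add: split P_def)
  have Q: "Q \<noteq> []" using split m(1) w(2) by (auto simp: c'_def)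
  have d': "distinct (P @ Q)" using d by (simp flip: c'_PQ add: c'_def)
  have "hd P = cycle_succ c v" using m(2) by (cases P0) (simp_all add: c'_def[symmetric] split P_def)
  moreover have "hd Q = cycle_succ c w"
  proof -
    have "cycle_succ c' w = hd Q" using cycle_succ_append[OF d' _ Q] by (simp add: c'_PQ P_def)
    then show ?thesis using cycle_succ_rotate[OF d w(1)] by (simp add: c'_def)
  qed
  moreover have "last Q = v" using m(1) Q by (simp add: c'_def[symmetric] c'_PQ)
  moreover have "is_cycle V E (P @ Q)" using is_cycle_rotate[OF c] by (simp flip: c'_PQ add: c'_def)
  moreover have "x \<notin> set (P @ Q)" using x(1) by (simp flip: c'_PQ add: c'_def)
  ultimately have "is_cycle V E (rev P @ Q @ [x])"
    using x chord Q edge_commute by (intro is_cycle_reverse_prefix) (auto simp: P_def)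
  moreover have "set c \<subseteq> set (rev P @ Q @ [x])" "length (rev P @ Q @ [x]) = length c + 1"
    using arg_cong[OF c'_PQ, of set] arg_cong[OF c'_PQ, of length] by (auto simp: c'_def)
  ultimately show ?thesis unfolding extendable_cycle_def by blast
qed

lemma exists_cherry:
  assumes conn: "connected_graph V E" and three: "card V \<ge> 3"
  obtains v u w where "E v u" "E v w" "u \<noteq> w"
proof -
  have small: "\<not> V \<subseteq> {a, b}" for a b
  proof
    assume "V \<subseteq> {a, b}"
    then have "card V \<le> card {a, b}" by (intro card_mono) auto
    also have "\<dots> \<le> 2" by (simp add: card_insert_if)
    finally show False using three by simp
  qed
  obtain a where a: "a \<in> V" using small by blast
  obtain a' where "E a a'" "a' \<noteq> a"
    using connected_graph_edge_leaving[OF conn, of a "{a}"] a small[of a a] by blast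
  moreover obtain u y where "u \<in> {a, a'}" "y \<notin> {a, a'}" "E u y"
    using connected_graph_edge_leaving[OF conn, of a "{a, a'}"] a small[of a a'] by blast
  ultimately show ?thesis using that edge_commute by blast
qed

end

locale local_degree_graph = sgraph +
  assumes connected: "connected_graph V E"
    and local_degree: "\<And>v u w. v \<in> V \<Longrightarrow> u \<in> nbhd V E v \<Longrightarrow> w \<in> nbhd V E v \<Longrightarrow> u \<noteq> w \<Longrightarrow>
      degree V E v \<le> induced_degree (nbhd V E v) E u + induced_degree (nbhd V E v) E w"
begin

lemma card_outside_le_common_neighbours:
  assumes w: "w \<in> V" and xy: "x \<in> nbhd V E w" "y \<in> nbhd V E w" "x \<noteq> y"
    and D: "D \<subseteq> nbhd V E w - {z. E x z \<or> E y z}"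
  shows "card D \<le> card {z \<in> nbhd V E w. E x z \<and> E y z}"
proof -
  let ?L = "nbhd V E w"
  have "card ?L \<le> card {z \<in> ?L. E x z} + card {z \<in> ?L. E y z}"
    using local_degree[OF w xy] by (simp add: induced_degree_def degree_def)
  then have "card D \<le> card ({z \<in> ?L. E x z} \<inter> {z \<in> ?L. E y z})"
    using D finite_vertices by (intro card_le_card_Int_if_outside_Un) (auto simp: nbhd_def)
  also have "{z \<in> ?L. E x z} \<inter> {z \<in> ?L. E y z} = {z \<in> ?L. E x z \<and> E y z}" by blast
  finally show ?thesis .
qed

text \<open>Non-extendability puts x, w+ and the v+ counted on the left outside N(x) \<union> N(w+), and
  the common neighbours of x and w+ in N(w) into X.\<close>
lemma nonextendable_cycle_local_count:
  assumes c: "is_cycle V E c" and nonext: "\<not> extendable_cycle V E c"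
    and x: "x \<in> V" "x \<notin> set c" and X: "X = {v \<in> set c. E x v}" and w: "w \<in> X"
  shows "2 + card {v \<in> X. E w v \<and> E w (cycle_succ c v)}
           \<le> card {u \<in> X. E u w \<and> E u (cycle_succ c w)}"
proof -
  let ?s = "cycle_succ c"
  define H where "H = {v \<in> X. E w v \<and> E w (?s v)}"
  define L where "L = nbhd V E w"
  define Out where "Out = L - {z. E x z \<or> E (?s w) z}"
  have d: "distinct c" and cV: "set c \<subseteq> V" using c by (auto simp: is_cycle_def)
  have wc: "w \<in> set c" and xw: "E x w" using w X by auto
  have sw: "?s w \<in> set c" "E w (?s w)"
    using cycle_succ_in_set[OF d wc] is_cycle_edge_succ[OF c wc] by auto
  have no_insert: "\<not> (E v y \<and> E y (?s v))" if "v \<in> set c" "y \<in> V" "y \<notin> set c" for v y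
    using extendable_cycle_insert[OF c that(1,3,2)] nonext by blast
  have no_crossing: "\<not> E (?s u) (?s v)" if "u \<in> X" "v \<in> X" "u \<noteq> v" for u v
    using extendable_cycle_crossing[OF c, of u v x] that x nonext X by auto
  have xL: "x \<in> L" and swL: "?s w \<in> L"
    using x xw sw cV edge_commute by (auto simp: L_def nbhd_def)
  have "x \<noteq> ?s w" using x sw by auto
  have H_out: "?s ` H \<subseteq> Out"
  proof
    fix z assume "z \<in> ?s ` H"
    then obtain v where v: "v \<in> X" "E w v" "E w (?s v)" and z: "z = ?s v" by (auto simp: H_def)
    have "v \<noteq> w" using v(2) edge_irrefl by blast
    have vc: "v \<in> set c" "E x v" using v(1) X by auto
    have "z \<in> L" using z v(3) cycle_succ_in_set[OF d vc(1)] cV by (auto simp: L_def nbhd_def)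
    moreover have "\<not> E x z" using no_insert[OF vc(1) x(1,2)] vc(2) z by (auto simp: edge_commute)
    moreover have "\<not> E (?s w) z" using no_crossing[OF w v(1)] \<open>v \<noteq> w\<close> z by blast
    ultimately show "z \<in> Out" by (simp add: Out_def)
  qed
  moreover have "x \<in> Out" "?s w \<in> Out"
    using xL swL no_insert[OF wc x(1,2)] xw edge_irrefl by (auto simp: Out_def edge_commute)
  ultimately have "card (insert x (insert (?s w) (?s ` H))) \<le> card {z \<in> L. E x z \<and> E (?s w) z}"
    using card_outside_le_common_neighbours[of w x "?s w"] wc cV xL swL \<open>x \<noteq> ?s w\<close>
    by (simp add: L_def Out_def subset_iff)
  also have "{z \<in> L. E x z \<and> E (?s w) z} = {u \<in> X. E u w \<and> E u (?s w)}"
    using no_insert[OF wc] edge_vertices cV X by (auto simp: L_def nbhd_def edge_commute)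
  finally have le: "card (insert x (insert (?s w) (?s ` H))) \<le> card {u \<in> X. E u w \<and> E u (?s w)}" .
  have H_c: "H \<subseteq> set c" using X by (auto simp: H_def)
  have "?s w \<notin> ?s ` H"
    using inj_on_image_mem_iff[OF inj_on_cycle_succ[OF d] wc H_c] edge_irrefl by (auto simp: H_def)
  moreover have "x \<notin> ?s ` H" using H_c cycle_succ_in_set[OF d] x(2) by auto
  moreover have "card (?s ` H) = card H"
    using card_image inj_on_subset[OF inj_on_cycle_succ[OF d] H_c] by blast
  moreover have "finite H" using finite_subset[OF H_c] by simp
  ultimately show ?thesis using le \<open>x \<noteq> ?s w\<close> by (simp add: H_def)
qed

theorem cycle_extendable:
  assumes c: "is_cycle V E c" and nonham: "set c \<noteq> V"
  shows "extendable_cycle V E c"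
proof (rule ccontr)
  assume nonext: "\<not> extendable_cycle V E c"
  have cV: "set c \<subseteq> V" and "c \<noteq> []" using c by (auto simp: is_cycle_def)
  obtain a where "a \<in> set c" using \<open>c \<noteq> []\<close> by (cases c) auto
  moreover obtain z where "z \<in> V" "z \<notin> set c" using cV nonham by blast
  ultimately obtain u x where ux: "u \<in> set c" "x \<in> V" "x \<notin> set c" "E u x"
    using connected_graph_edge_leaving[OF connected] cV by blast
  define X where "X = {v \<in> set c. E x v}"
  have X: "finite X" "X \<noteq> {}" using ux edge_commute by (auto simp: X_def)
  define R where "R a b \<longleftrightarrow> E a b \<and> E a (cycle_succ c b)" for a b
  have "2 * card X + (\<Sum>w\<in>X. card {v \<in> X. R w v}) = (\<Sum>w\<in>X. 2 + card {v \<in> X. R w v})"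
    unfolding sum.distrib by simp
  also have "\<dots> \<le> (\<Sum>w\<in>X. card {u \<in> X. R u w})"
    using nonextendable_cycle_local_count[OF c nonext ux(2,3) X_def]
    by (intro sum_mono) (simp add: R_def)
  also have "\<dots> = (\<Sum>w\<in>X. card {v \<in> X. R w v})" using X(1) by (rule sum_card_filter_swap)
  finally have "card X = 0" by simp
  then show False using X by simp
qed

lemma exists_cycle:
  assumes "card V \<ge> 3"
  obtains c where "is_cycle V E c"
proof -
  obtain v u w where vuw: "E v u" "E v w" "u \<noteq> w"
    using exists_cherry[OF connected assms] .
  define L where "L = nbhd V E v"
  have v: "v \<in> V" and uw: "u \<in> L" "w \<in> L"
    using vuw edge_vertices by (auto simp: L_def nbhd_def)
  have "card {u, w} \<le> card L"
    using uw finite_vertices by (intro card_mono) (auto simp: L_def nbhd_def)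
  then have "2 \<le> induced_degree L E u + induced_degree L E w"
    using local_degree[OF v, folded L_def, OF uw vuw(3)] vuw(3) by (simp add: degree_def L_def)
  then have "{t \<in> L. E u t} \<noteq> {} \<or> {t \<in> L. E w t} \<noteq> {}"
    unfolding induced_degree_def by (metis add.right_neutral card.empty not_numeral_le_zero)
  then obtain s t where st: "s \<in> L" "t \<in> L" "E s t" using uw by blast
  then have "is_cycle V E [v, s, t]"
    using v edge_irrefl edge_commute by (auto simp: is_cycle_def L_def nbhd_def nth_Cons split: nat.splits)
  then show ?thesis by (rule that)
qed

end

theorem mainTheorem1:
  fixes V :: "'a set" and E :: "'a \<Rightarrow> 'a \<Rightarrow> bool"
  assumes "simple_graph V E"
    and "connected_graph V E"
    and "card V \<ge> 3"
    and "\<forall>v\<in>V. \<forall>u\<in>nbhd V E v. \<forall>w\<in>nbhd V E v. u \<noteq> w \<longrightarrow>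
           induced_degree (nbhd V E v) E u + induced_degree (nbhd V E v) E w \<ge> degree V E v"
  shows "hamiltonian V E \<and> extendable_12 V E"
proof -
  interpret local_degree_graph V E
    using assms by unfold_locales auto
  obtain c where "is_cycle V E c" using exists_cycle assms(3) by blast
  then have "hamiltonian V E"
    using hamiltonian_if_cycles_extendable finite_vertices cycle_extendable by blast
  moreover have "extendable_12 V E"
    using cycle_extendable unfolding extendable_12_def extendable_cycle_def by blast
  ultimately show ?thesis ..
qed

end
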